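(* Let $k \ge 1$ and $k \le m < 2k$. The number of biGrassmannian permutations of $[m]$ that avoid $\operatorname{id}_k = 12\cdots k$ is $\binom{2k-m+1}{3}$.
   Context: A permutation is Grassmannian if it has at most one descent (one-line notation); it is biGrassmannian if both it and its inverse are Grassmannian. A permutation avoids $12\cdots k$ if it has no increasing subsequence of length $k$. *)

theory Defs
  imports "HOL-Combinatorics.Permutations"
begin

text \<open>Permutations of [m] = {1..m} are functions p with p permutes {1..m}.\<close>

definition descents :: "nat \<Rightarrow> (nat \<Rightarrow> nat) \<Rightarrow> nat set" where
  "descents m p = {i \<in> {1..<m}. p i > p (Suc i)}"

definition grassmannian :: "nat \<Rightarrow> (nat \<Rightarrow> nat) \<Rightarrow> bool" where
  "grassmannian m p \<longleftrightarrow> card (descents m p) \<le> 1"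

definition bigrassmannian :: "nat \<Rightarrow> (nat \<Rightarrow> nat) \<Rightarrow> bool" where
  "bigrassmannian m p \<longleftrightarrow> grassmannian m p \<and> grassmannian m (inv p)"

definition contains_id :: "nat \<Rightarrow> nat \<Rightarrow> (nat \<Rightarrow> nat) \<Rightarrow> bool" where
  "contains_id m k p \<longleftrightarrow> (\<exists>f :: nat \<Rightarrow> nat. f ` {..<k} \<subseteq> {1..m} \<and>
      strict_mono_on {..<k} f \<and> strict_mono_on {..<k} (p \<circ> f))"

definition avoids_id :: "nat \<Rightarrow> nat \<Rightarrow> (nat \<Rightarrow> nat) \<Rightarrow> bool" where
  "avoids_id m k p \<longleftrightarrow> \<not> contains_id m k p"

end

theory Submission
  imports Defs
begin

text \<open>A Grassmannian permutation \<open>p\<close> of \<open>[m]\<close> with its descent at \<open>r\<close> is increasing on \<open>[1, r]\<close> and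
  on \<open>[r + 1, m]\<close>, hence determined by the set \<open>A = p{1..r}\<close>. If \<open>p\<^sup>-\<^sup>1\<close> is Grassmannian as well, with
  descent at \<open>s\<close>, then \<open>A\<close> meets both \<open>[1, s]\<close> and \<open>[s + 1, m]\<close> in initial segments, \<open>s \<notin> A\<close> and
  \<open>s + 1 \<in> A\<close>; so \<open>A = [1, a] \<union> [a + c + 1, a + b + c]\<close> and \<open>p\<close> swaps two adjacent blocks of lengths
  \<open>b, c > 0\<close>. An increasing subsequence of such a swap misses one of the two blocks, so \<open>p\<close> avoids
  \<open>12\<dots>k\<close> iff \<open>b, c > m - k\<close>. Subtracting \<open>m - k\<close> from \<open>b\<close> and \<open>c\<close> leaves triples with
  \<open>b, c > 0\<close> and \<open>a + b + c \<le> 2k - m\<close>, which are the gap sequences of the 3-subsets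
  \<open>{a, a + b, a + b + c}\<close> of \<open>[0, 2k - m]\<close>.\<close>

lemma strict_mono_on_atLeastAtMostI:
  fixes f :: "nat \<Rightarrow> 'a::order"
  assumes "\<And>i. lo \<le> i \<Longrightarrow> i < hi \<Longrightarrow> f i < f (Suc i)"
  shows "strict_mono_on {lo..hi} f"
proof (rule strict_mono_onI)
  fix x y assume "x \<in> {lo..hi}" "y \<in> {lo..hi}" "x < y"
  then have "Suc x \<le> y" "y \<le> hi" "lo \<le> x"
    by auto
  then show "f x < f y"
  proof (induction y rule: dec_induct)
    case base
    then show ?case using assms by simp
  next
    case (step n)
    then show ?case using assms[of n] by fastforce
  qed
qed

lemma strict_mono_on_image_unique:
  fixes f g :: "'a::linorder \<Rightarrow> 'b::linorder"
  assumes "finite A" "strict_mono_on A f" "strict_mono_on A g" "f ` A = g ` A" "x \<in> A"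
  shows "f x = g x"
proof -
  let ?xs = "sorted_list_of_set A"
  have sorted: "sorted_wrt (<) (map h ?xs)" if "strict_mono_on A h" for h :: "'a \<Rightarrow> 'b"
    using that \<open>finite A\<close>
    by (auto simp: sorted_wrt_map intro!: sorted_wrt_mono_rel[OF _ strict_sorted_list_of_set]
        dest: strict_mono_onD)
  have "map f ?xs = map g ?xs"
    by (rule strict_sorted_equal) (use sorted assms in auto)
  then show ?thesis
    using assms(1,5) by (simp add: map_eq_conv)
qed

text \<open>In one-line notation \<open>block_swap a b c\<close> is
  \<open>1 \<dots> a, a + c + 1 \<dots> a + b + c, a + 1 \<dots> a + c, a + b + c + 1 \<dots>\<close>.\<close>

definition block_swap :: "nat \<Rightarrow> nat \<Rightarrow> nat \<Rightarrow> nat \<Rightarrow> nat" where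
  "block_swap a b c i =
     (if i \<le> a then i else if i \<le> a + b then i + c else if i \<le> a + b + c then i - b else i)"

lemma block_swap_block_swap [simp]: "block_swap a c b (block_swap a b c i) = i"
  by (auto simp: block_swap_def)

lemma inv_block_swap: "inv (block_swap a b c) = block_swap a c b"
  by (rule inv_equality) simp_all

lemma block_swap_permutes:
  assumes "a + b + c \<le> m"
  shows "block_swap a b c permutes {1..m}"
  unfolding permutes_def
proof (intro conjI allI impI)
  fix x assume "x \<notin> {1..m}"
  then show "block_swap a b c x = x"
    using assms by (auto simp: block_swap_def)
next
  fix y show "\<exists>!x. block_swap a b c x = y"
    by (metis block_swap_block_swap)
qed

lemma descents_block_swap: "descents m (block_swap a b c) \<subseteq> {a + b}"
  unfolding descents_def by (auto simp: block_swap_def)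

lemma bigrassmannian_block_swap: "bigrassmannian m (block_swap a b c)"
proof -
  have "grassmannian m (block_swap a b c)" for a b c
    using card_mono[OF _ descents_block_swap] by (simp add: grassmannian_def)
  then show ?thesis
    by (simp add: bigrassmannian_def inv_block_swap)
qed

lemma image_block_swap_prefix:
  "block_swap a b c ` {1..a + b} = {1..a} \<union> {a + c + 1..a + b + c}"
proof -
  have "block_swap a b c ` {1..a} = {1..a}"
    by (auto simp: block_swap_def)
  moreover have "block_swap a b c ` {a + 1..a + b} = (\<lambda>i. i + c) ` {a + 1..a + b}"
    by (rule image_cong) (auto simp: block_swap_def)
  moreover have "{1..a + b} = {1..a} \<union> {a + 1..a + b}"
    by auto
  ultimately show ?thesis
    by (simp add: image_Un ac_simps)
qed

lemma block_swap_inj: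
  assumes "0 < b" "0 < c" "0 < b'" "0 < c'" "block_swap a b c = block_swap a' b' c'"
  shows "a = a'" "b = b'" "c = c'"
proof -
  have eq: "block_swap a b c i = block_swap a' b' c' i" for i
    using assms(5) by simp
  show "a = a'"
  proof (rule ccontr)
    assume "a \<noteq> a'"
    then show False
      using eq[of "Suc (min a a')"] assms(1-4) by (auto simp: block_swap_def min_def split: if_splits)
  qed
  then show "c = c'"
    using eq[of "Suc a"] assms(1-4) by (simp add: block_swap_def split: if_splits)
  with \<open>a = a'\<close> show "b = b'"
    using eq[of "a + b + c"] assms(1-4) by (simp add: block_swap_def split: if_splits)
qed

lemma strict_mono_on_if_no_descents:
  assumes "inj f" "1 \<le> lo" "hi \<le> m" "descents m f \<inter> {lo..<hi} = {}"
  shows "strict_mono_on {lo..hi} f"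
proof (rule strict_mono_on_atLeastAtMostI)
  fix i assume "lo \<le> i" "i < hi"
  then have "i \<notin> descents m f"
    using assms(4) by auto
  then have "\<not> f (Suc i) < f i"
    using assms(2,3) \<open>lo \<le> i\<close> \<open>i < hi\<close> by (simp add: descents_def)
  moreover have "f i \<noteq> f (Suc i)"
    by (simp add: inj_eq[OF assms(1)])
  ultimately show "f i < f (Suc i)"
    by simp
qed

lemma strict_mono_on_around_descent:
  assumes "inj f" "descents m f = {t}"
  shows "strict_mono_on {1..t} f" "strict_mono_on {Suc t..m} f"
proof -
  have "t \<in> descents m f"
    using assms(2) by simp
  then have "1 \<le> t" "t < m"
    by (simp_all add: descents_def)
  show "strict_mono_on {1..t} f"
    by (rule strict_mono_on_if_no_descents[OF assms(1), where m = m]) (use assms(2) \<open>t < m\<close> in auto)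
  show "strict_mono_on {Suc t..m} f"
    by (rule strict_mono_on_if_no_descents[OF assms(1), where m = m]) (use assms(2) \<open>1 \<le> t\<close> in auto)
qed

lemma permutes_eq_id_if_no_descents:
  assumes "f permutes {1..m}" "descents m f = {}"
  shows "f = id"
proof
  fix i
  have "strict_mono_on {1..m} f"
    by (rule strict_mono_on_if_no_descents[OF permutes_inj[OF assms(1)], where m = m]) (use assms(2) in auto)
  moreover have "strict_mono_on {1..m} id" "f ` {1..m} = id ` {1..m}"
    using assms(1) by (auto simp: strict_mono_onI permutes_image)
  ultimately show "f i = id i"
    using assms(1) strict_mono_on_image_unique[of "{1..m}" f id i]
    by (cases "i \<in> {1..m}") (simp_all add: permutes_not_in)
qed

lemma grassmannian_permutes_cases:
  assumes "f permutes {1..m}" "grassmannian m f"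
  obtains "f = id" | t where "descents m f = {t}"
proof -
  have "finite (descents m f)"
    by (simp add: descents_def)
  moreover have "card (descents m f) = 0 \<or> card (descents m f) = 1"
    using assms(2) by (auto simp: grassmannian_def)
  ultimately consider "descents m f = {}" | "card (descents m f) = 1"
    by auto
  then show ?thesis
  proof cases
    case 1
    then show ?thesis
      using that(1) permutes_eq_id_if_no_descents[OF assms(1)] by blast
  next
    case 2
    then obtain t where "descents m f = {t}"
      by (rule card_1_singletonE)
    then show ?thesis
      by (rule that(2))
  qed
qed

lemma permutes_eq_if_image_prefix_eq:
  assumes f: "f permutes {1..m}" "strict_mono_on {1..r} f" "strict_mono_on {Suc r..m} f"
    and g: "g permutes {1..m}" "strict_mono_on {1..r} g" "strict_mono_on {Suc r..m} g"
    and image: "f ` {1..r} = g ` {1..r}"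
  shows "f = g"
proof
  fix i
  have suffix: "{Suc r..m} = {1..m} - {1..r}"
    by auto
  have "f ` {Suc r..m} = g ` {Suc r..m}"
    unfolding suffix using f(1) g(1) image by (simp add: image_set_diff permutes_inj permutes_image)
  consider "i \<notin> {1..m}" | "i \<in> {1..r}" | "i \<in> {Suc r..m}"
    by fastforce
  then show "f i = g i"
  proof cases
    case 1
    then show ?thesis
      using f(1) g(1) by (simp add: permutes_not_in)
  next
    case 2
    then show ?thesis
      using strict_mono_on_image_unique[OF _ f(2) g(2) image] by simp
  next
    case 3
    then show ?thesis
      using strict_mono_on_image_unique[OF _ f(3) g(3) \<open>f ` {Suc r..m} = g ` {Suc r..m}\<close>] by simp
  qed
qed

lemma strict_mono_on_sublevel_set:
  fixes q :: "nat \<Rightarrow> 'a::linorder"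
  assumes "strict_mono_on {lo..hi} q" "lo \<le> Suc hi"
  obtains e where "lo \<le> e" "e \<le> Suc hi" "{v \<in> {lo..hi}. q v \<le> y} = {lo..<e}"
proof (cases "{v \<in> {lo..hi}. q v \<le> y} = {}")
  case True
  then show ?thesis
    using that[of lo] assms(2) by simp
next
  case False
  define D where "D = {v \<in> {lo..hi}. q v \<le> y}"
  have "D \<subseteq> {lo..hi}" "finite D"
    by (auto simp: D_def intro: finite_subset[of _ "{lo..hi}"])
  moreover have "D \<noteq> {}"
    using False by (simp add: D_def)
  ultimately have "Max D \<in> D"
    by simp
  have "D = {lo..<Suc (Max D)}"
  proof
    show "D \<subseteq> {lo..<Suc (Max D)}"
      using \<open>D \<subseteq> {lo..hi}\<close> \<open>finite D\<close> by (auto simp: less_Suc_eq_le)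
    show "{lo..<Suc (Max D)} \<subseteq> D"
    proof
      fix u assume "u \<in> {lo..<Suc (Max D)}"
      then have "u \<in> {lo..hi}" "q u \<le> q (Max D)"
        using \<open>Max D \<in> D\<close> strict_mono_on_leD[OF assms(1), of u "Max D"] by (auto simp: D_def)
      then show "u \<in> D"
        using \<open>Max D \<in> D\<close> by (auto simp: D_def)
    qed
  qed
  then show ?thesis
    using that[of "Suc (Max D)"] \<open>Max D \<in> D\<close> by (auto simp: D_def)
qed

lemma sublevel_set_single_descent:
  assumes q: "q permutes {1..m}" and s: "descents m q = {s}"
  obtains e1 e2 where "1 \<le> e1" "e1 \<le> Suc s" "Suc s \<le> e2" "e2 \<le> Suc m"
    "{v \<in> {1..m}. q v \<le> y} = {1..<e1} \<union> {Suc s..<e2}"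
proof -
  have "s \<in> descents m q"
    using s by simp
  then have "s < m"
    by (simp add: descents_def)
  note q_mono = strict_mono_on_around_descent[OF permutes_inj[OF q] s]
  obtain e1 where e1: "1 \<le> e1" "e1 \<le> Suc s" "{v \<in> {1..s}. q v \<le> y} = {1..<e1}"
    using strict_mono_on_sublevel_set[OF q_mono(1)] by auto
  obtain e2 where e2: "Suc s \<le> e2" "e2 \<le> Suc m" "{v \<in> {Suc s..m}. q v \<le> y} = {Suc s..<e2}"
    using strict_mono_on_sublevel_set[OF q_mono(2)] \<open>s < m\<close> by auto
  have "{v \<in> {1..m}. q v \<le> y} = {v \<in> {1..s}. q v \<le> y} \<union> {v \<in> {Suc s..m}. q v \<le> y}"
    using \<open>s < m\<close> by auto
  then show ?thesis
    using that e1 e2 by simp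
qed

lemma image_prefix_eq_inv_sublevel_set:
  fixes p :: "nat \<Rightarrow> nat"
  assumes p: "p permutes {1..m}" and "r \<le> m"
  shows "p ` {1..r} = {v \<in> {1..m}. inv p v \<le> r}"
proof
  show "p ` {1..r} \<subseteq> {v \<in> {1..m}. inv p v \<le> r}"
  proof
    fix v assume "v \<in> p ` {1..r}"
    then obtain x where "x \<in> {1..r}" "v = p x"
      by blast
    moreover from this have "p x \<in> {1..m}"
      using \<open>r \<le> m\<close> permutes_in_image[OF p, of x] by simp
    ultimately show "v \<in> {v \<in> {1..m}. inv p v \<le> r}"
      using permutes_inverses(2)[OF p] by auto
  qed
  show "{v \<in> {1..m}. inv p v \<le> r} \<subseteq> p ` {1..r}"
  proof
    fix v assume "v \<in> {v \<in> {1..m}. inv p v \<le> r}"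
    then have "inv p v \<in> {1..r}"
      using permutes_in_image[OF permutes_inv[OF p], of v] by auto
    then show "v \<in> p ` {1..r}"
      using image_eqI[of v p "inv p v" "{1..r}"] permutes_inverses(1)[OF p] by simp
  qed
qed

text \<open>Since \<open>p\<close> is increasing on either side of its descent \<open>r\<close>, the inversion \<open>q (s + 1) < q s\<close> of
  \<open>q = p\<^sup>-\<^sup>1\<close> must straddle \<open>r\<close>.\<close>

lemma inv_descent_straddles_descent:
  assumes p: "p permutes {1..m}" and r: "descents m p = {r}" and s: "descents m (inv p) = {s}"
  shows "inv p (Suc s) \<le> r" "r < inv p s"
proof -
  have "s \<in> descents m (inv p)"
    using s by simp
  then have "1 \<le> s" "s < m" and inversion: "inv p (Suc s) < inv p s"
    by (simp_all add: descents_def)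
  then have in_range: "inv p s \<in> {1..m}" "inv p (Suc s) \<in> {1..m}"
    using permutes_in_image[OF permutes_inv[OF p], of s]
      permutes_in_image[OF permutes_inv[OF p], of "Suc s"] by simp_all
  note p_mono = strict_mono_on_around_descent[OF permutes_inj[OF p] r]
  have p_inv: "p (inv p v) = v" for v
    by (rule permutes_inverses(1)[OF p])
  show "r < inv p s"
  proof (rule ccontr)
    assume "\<not> r < inv p s"
    then have "inv p (Suc s) \<in> {1..r}" "inv p s \<in> {1..r}"
      using in_range inversion by auto
    then have "p (inv p (Suc s)) < p (inv p s)"
      using inversion by (rule strict_mono_onD[OF p_mono(1)])
    then show False
      by (simp add: p_inv)
  qed
  show "inv p (Suc s) \<le> r"
  proof (rule ccontr)
    assume "\<not> inv p (Suc s) \<le> r"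
    then have "inv p (Suc s) \<in> {Suc r..m}" "inv p s \<in> {Suc r..m}"
      using in_range inversion by auto
    then have "p (inv p (Suc s)) < p (inv p s)"
      using inversion by (rule strict_mono_onD[OF p_mono(2)])
    then show False
      by (simp add: p_inv)
  qed
qed

lemma grassmannian_eq_block_swap:
  assumes p: "p permutes {1..m}" "descents m p = {a + b}" and "a + b + c \<le> m"
    and image: "p ` {1..a + b} = {1..a} \<union> {a + c + 1..a + b + c}"
  shows "p = block_swap a b c"
proof (rule permutes_eq_if_image_prefix_eq)
  show "p permutes {1..m}"
    by (rule p(1))
  show "strict_mono_on {1..a + b} p" "strict_mono_on {Suc (a + b)..m} p"
    by (rule strict_mono_on_around_descent[OF permutes_inj[OF p(1)] p(2)])+
  show "block_swap a b c permutes {1..m}"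
    using \<open>a + b + c \<le> m\<close> by (rule block_swap_permutes)
  then show "strict_mono_on {1..a + b} (block_swap a b c)"
    "strict_mono_on {Suc (a + b)..m} (block_swap a b c)"
    using descents_block_swap[of m a b c] \<open>a + b + c \<le> m\<close>
    by (auto intro!: strict_mono_on_if_no_descents[where m = m] permutes_inj)
  show "p ` {1..a + b} = block_swap a b c ` {1..a + b}"
    unfolding image image_block_swap_prefix ..
qed

lemma bigrassmannian_imp_block_swap:
  assumes p: "p permutes {1..m}" and "bigrassmannian m p"
  obtains a b c where "a + b + c \<le> m" "p = block_swap a b c"
proof (cases "p = id")
  case True
  then show ?thesis
    using that[of 0 0 0] by (simp add: block_swap_def fun_eq_iff)
next
  case False
  then have "inv p \<noteq> id"
    using permutes_inverses(1)[OF p] by (metis eq_id_iff)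
  obtain r where r: "descents m p = {r}"
    using grassmannian_permutes_cases[OF p] False assms(2) unfolding bigrassmannian_def by metis
  obtain s where s: "descents m (inv p) = {s}"
    using grassmannian_permutes_cases[OF permutes_inv[OF p]] \<open>inv p \<noteq> id\<close> assms(2)
    unfolding bigrassmannian_def by metis
  have "r \<in> descents m p" "s \<in> descents m (inv p)"
    using r s by simp_all
  then have "r < m" "1 \<le> s" "s < m"
    by (simp_all add: descents_def)
  have A_eq: "p ` {1..r} = {v \<in> {1..m}. inv p v \<le> r}"
    by (rule image_prefix_eq_inv_sublevel_set[OF p]) (use \<open>r < m\<close> in simp)
  obtain e1 e2 where e: "1 \<le> e1" "e1 \<le> Suc s" "Suc s \<le> e2" "e2 \<le> Suc m"
    and sublevel: "{v \<in> {1..m}. inv p v \<le> r} = {1..<e1} \<union> {Suc s..<e2}"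
    by (rule sublevel_set_single_descent[OF permutes_inv[OF p] s])
  have A_intervals: "p ` {1..r} = {1..<e1} \<union> {Suc s..<e2}"
    using sublevel unfolding A_eq .
  have "s \<notin> p ` {1..r}" "Suc s \<in> p ` {1..r}"
    using inv_descent_straddles_descent[OF p r s] \<open>1 \<le> s\<close> \<open>s < m\<close> unfolding A_eq by auto
  then have "e1 \<le> s" "Suc (Suc s) \<le> e2"
    using \<open>1 \<le> s\<close> e unfolding A_intervals by auto
  define a where "a = e1 - 1"
  define b where "b = e2 - Suc s"
  define c where "c = s - a"
  have A_blocks: "p ` {1..r} = {1..a} \<union> {a + c + 1..a + b + c}"
    using \<open>e1 \<le> s\<close> \<open>Suc (Suc s) \<le> e2\<close> e unfolding A_intervals a_def b_def c_def by auto
  have "card (p ` {1..r}) = r"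
    using inj_on_subset[OF permutes_inj[OF p]] by (simp add: card_image)
  moreover have "card ({1..a} \<union> {a + c + 1..a + b + c}) = a + b"
    using \<open>e1 \<le> s\<close> by (subst card_Un_disjoint) (auto simp: a_def c_def)
  ultimately have "r = a + b"
    using A_blocks by simp
  moreover have "a + b + c \<le> m"
    using \<open>e1 \<le> s\<close> \<open>Suc (Suc s) \<le> e2\<close> e by (simp add: a_def b_def c_def)
  ultimately have "p = block_swap a b c"
    using grassmannian_eq_block_swap[OF p, of a b c] r A_blocks by simp
  with \<open>a + b + c \<le> m\<close> show ?thesis
    by (rule that)
qed

lemma contains_id_iff_increasing_subset:
  "contains_id m k p \<longleftrightarrow> (\<exists>S \<subseteq> {1..m}. card S = k \<and> strict_mono_on S p)"
proof
  assume "contains_id m k p"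
  then obtain f where f: "f ` {..<k} \<subseteq> {1..m}" "strict_mono_on {..<k} f"
    "strict_mono_on {..<k} (p \<circ> f)"
    unfolding contains_id_def by blast
  have "card (f ` {..<k}) = k"
    using card_image[OF strict_mono_on_imp_inj_on[OF f(2)]] by simp
  moreover have "strict_mono_on (f ` {..<k}) p"
  proof (rule strict_mono_onI)
    fix x y assume "x \<in> f ` {..<k}" "y \<in> f ` {..<k}" "x < y"
    then obtain i j where ij: "i < k" "j < k" "x = f i" "y = f j" "f i < f j"
      by blast
    then have "i < j"
      using strict_mono_on_leD[OF f(2), of j i] by (cases "i < j") auto
    then show "p x < p y"
      using strict_mono_onD[OF f(3), of i j] ij by simp
  qed
  ultimately show "\<exists>S \<subseteq> {1..m}. card S = k \<and> strict_mono_on S p"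
    using f(1) by blast
next
  assume "\<exists>S \<subseteq> {1..m}. card S = k \<and> strict_mono_on S p"
  then obtain S where S: "S \<subseteq> {1..m}" "card S = k" "strict_mono_on S p"
    by blast
  then have "finite S"
    using finite_subset by blast
  define f where "f i = sorted_list_of_set S ! i" for i
  have f_in: "f i \<in> S" if "i < k" for i
    using that \<open>finite S\<close> S(2) nth_mem[of i "sorted_list_of_set S"] by (simp add: f_def)
  have f_mono: "strict_mono_on {..<k} f"
    using \<open>finite S\<close> S(2)
    by (auto intro!: strict_mono_onI sorted_wrt_nth_less[OF strict_sorted_list_of_set] simp: f_def)
  moreover have "strict_mono_on {..<k} (p \<circ> f)"
    using f_in strict_mono_onD[OF S(3)] strict_mono_onD[OF f_mono] by (auto intro!: strict_mono_onI)
  moreover have "f ` {..<k} \<subseteq> {1..m}"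
    using f_in S(1) by auto
  ultimately show "contains_id m k p"
    unfolding contains_id_def by blast
qed

lemma strict_mono_on_block_swap_off_blocks:
  "strict_mono_on (- {Suc a..a + b}) (block_swap a b c)"
  "strict_mono_on (- {Suc (a + b)..a + b + c}) (block_swap a b c)"
  by (auto intro!: strict_mono_onI simp: block_swap_def)

lemma increasing_subset_block_swap:
  assumes "strict_mono_on S (block_swap a b c)"
  shows "S \<inter> {Suc a..a + b} = {} \<or> S \<inter> {Suc (a + b)..a + b + c} = {}"
proof (rule ccontr)
  assume "\<not> ?thesis"
  then obtain x y where "x \<in> S" "x \<in> {Suc a..a + b}" "y \<in> S" "y \<in> {Suc (a + b)..a + b + c}"
    by blast
  moreover from this have "block_swap a b c y < block_swap a b c x"
    by (auto simp: block_swap_def)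
  ultimately show False
    using strict_mono_onD[OF assms, of x y] by auto
qed

lemma avoids_id_block_swap_iff:
  assumes "a + b + c \<le> m"
  shows "avoids_id m k (block_swap a b c) \<longleftrightarrow> m < b + k \<and> m < c + k"
proof
  assume avoids: "avoids_id m k (block_swap a b c)"
  show "m < b + k \<and> m < c + k"
  proof (rule ccontr)
    assume "\<not> (m < b + k \<and> m < c + k)"
    then consider "b + k \<le> m" | "c + k \<le> m"
      by linarith
    then obtain B where B: "B \<subseteq> {1..m}" "card B + k \<le> m" "strict_mono_on (- B) (block_swap a b c)"
    proof cases
      case 1
      then show ?thesis
        using that[of "{Suc a..a + b}"] assms strict_mono_on_block_swap_off_blocks(1) by auto
    next
      case 2
      then show ?thesis
        using that[of "{Suc (a + b)..a + b + c}"] assms strict_mono_on_block_swap_off_blocks(2) by auto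
    qed
    have "k \<le> card ({1..m} - B)"
      using B(1,2) by (simp add: card_Diff_subset finite_subset)
    then obtain S where "S \<subseteq> {1..m} - B" "card S = k"
      by (meson obtain_subset_with_card_n)
    moreover have "strict_mono_on S (block_swap a b c)"
      by (rule monotone_on_subset[OF B(3)]) (use \<open>S \<subseteq> {1..m} - B\<close> in blast)
    ultimately have "contains_id m k (block_swap a b c)"
      unfolding contains_id_iff_increasing_subset by blast
    with avoids show False
      by (simp add: avoids_id_def)
  qed
next
  assume bounds: "m < b + k \<and> m < c + k"
  show "avoids_id m k (block_swap a b c)"
    unfolding avoids_id_def contains_id_iff_increasing_subset
  proof
    assume "\<exists>S \<subseteq> {1..m}. card S = k \<and> strict_mono_on S (block_swap a b c)"
    then obtain S where S: "S \<subseteq> {1..m}" "card S = k" "strict_mono_on S (block_swap a b c)"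
      by blast
    obtain B where B: "B \<subseteq> {1..m}" "m < card B + k" "S \<subseteq> {1..m} - B"
      using increasing_subset_block_swap[OF S(3)]
    proof
      assume "S \<inter> {Suc a..a + b} = {}"
      then show ?thesis
        using that[of "{Suc a..a + b}"] S(1) assms bounds by auto
    next
      assume "S \<inter> {Suc (a + b)..a + b + c} = {}"
      then show ?thesis
        using that[of "{Suc (a + b)..a + b + c}"] S(1) assms bounds by auto
    qed
    have "k \<le> card ({1..m} - B)"
      using card_mono[OF _ B(3)] S(2) by simp
    moreover have "card B \<le> m"
      using card_mono[OF _ B(1)] by simp
    ultimately show False
      using B(1,2) by (simp add: card_Diff_subset finite_subset)
  qed
qed

lemma card_positive_gap_triples:
  "card {(a, b, c). 0 < b \<and> 0 < c \<and> a + b + c \<le> n} = Suc n choose 3"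
proof -
  define T where "T = {(a, b, c). 0 < b \<and> 0 < c \<and> a + b + c \<le> (n::nat)}"
  define h :: "nat \<times> nat \<times> nat \<Rightarrow> nat set" where "h = (\<lambda>(a, b, c). {a, a + b, a + b + c})"
  have h_list: "h t = set [fst t, fst t + fst (snd t), fst t + fst (snd t) + snd (snd t)]"
    "sorted_wrt (<) [fst t, fst t + fst (snd t), fst t + fst (snd t) + snd (snd t)]"
    if "t \<in> T" for t
    using that by (auto simp: h_def T_def split: prod.splits)
  have "inj_on h T"
  proof (rule inj_onI)
    fix t u assume "t \<in> T" "u \<in> T" "h t = h u"
    then show "t = u"
      using strict_sorted_equal[OF h_list(2)[of t] h_list(2)[of u]] h_list(1)[of t] h_list(1)[of u]
      by (auto simp: prod_eq_iff)
  qed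
  moreover have "h ` T = {X. X \<subseteq> {0..n} \<and> card X = 3}"
  proof (intro equalityI subsetI)
    fix X assume "X \<in> h ` T"
    then obtain t where t: "t \<in> T" "X = h t"
      by blast
    then have "card X = 3"
      using h_list[OF t(1)] by (simp add: strict_sorted_iff distinct_card)
    moreover have "X \<subseteq> {0..n}"
      using t by (auto simp: h_def T_def)
    ultimately show "X \<in> {X. X \<subseteq> {0..n} \<and> card X = 3}"
      by simp
  next
    fix X assume "X \<in> {X. X \<subseteq> {0..n} \<and> card X = 3}"
    then have X: "X \<subseteq> {0..n}" "card X = 3" "finite X"
      using finite_subset by auto
    then have "length (sorted_list_of_set X) = 3"
      by simp
    then obtain u v w where uvw: "sorted_list_of_set X = [u, v, w]"
      unfolding numeral_3_eq_3 length_Suc_conv length_0_conv by blast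
    then have "u < v" "v < w" "X = {u, v, w}"
      using strict_sorted_list_of_set[of X] set_sorted_list_of_set[OF X(3)] by auto
    then have "(u, v - u, w - v) \<in> T" "X = h (u, v - u, w - v)"
      using X(1) by (auto simp: h_def T_def)
    then show "X \<in> h ` T"
      by (rule rev_image_eqI)
  qed
  ultimately have "card T = card {X. X \<subseteq> {0..n} \<and> card X = 3}"
    using card_image by fastforce
  then show ?thesis
    by (simp add: T_def n_subsets)
qed

lemma bigrassmannian_avoiding_eq_image_block_swap:
  fixes k m :: nat
  assumes "k \<le> m"
  shows "{p. p permutes {1..m} \<and> bigrassmannian m p \<and> avoids_id m k p} =
    (\<lambda>(a, b, c). block_swap a (b + (m - k)) (c + (m - k))) `
      {(a, b, c). 0 < b \<and> 0 < c \<and> a + b + c \<le> 2 * k - m}"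
proof (intro equalityI subsetI)
  fix p assume "p \<in> {p. p permutes {1..m} \<and> bigrassmannian m p \<and> avoids_id m k p}"
  then obtain a b c where abc: "a + b + c \<le> m" "p = block_swap a b c" and "avoids_id m k p"
    using bigrassmannian_imp_block_swap by blast
  then have "m < b + k" "m < c + k"
    using avoids_id_block_swap_iff by simp_all
  with abc assms show "p \<in> (\<lambda>(a, b, c). block_swap a (b + (m - k)) (c + (m - k))) `
      {(a, b, c). 0 < b \<and> 0 < c \<and> a + b + c \<le> 2 * k - m}"
    by (intro image_eqI[where x = "(a, b - (m - k), c - (m - k))"]) auto
next
  fix p assume "p \<in> (\<lambda>(a, b, c). block_swap a (b + (m - k)) (c + (m - k))) `
      {(a, b, c). 0 < b \<and> 0 < c \<and> a + b + c \<le> 2 * k - m}"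
  then obtain a b c where abc: "0 < b" "0 < c" "a + b + c \<le> 2 * k - m"
    and p: "p = block_swap a (b + (m - k)) (c + (m - k))"
    by auto
  have "a + (b + (m - k)) + (c + (m - k)) \<le> m" "m < b + (m - k) + k" "m < c + (m - k) + k"
    using abc assms by auto
  then show "p \<in> {p. p permutes {1..m} \<and> bigrassmannian m p \<and> avoids_id m k p}"
    using block_swap_permutes[of a "b + (m - k)" "c + (m - k)" m]
    by (simp add: p bigrassmannian_block_swap avoids_id_block_swap_iff)
qed

lemma inj_on_block_swap_shifted:
  "inj_on (\<lambda>(a, b, c). block_swap a (b + d) (c + d)) {(a, b, c). 0 < b \<and> 0 < c \<and> a + b + c \<le> n}"
proof (rule inj_onI)
  fix t u
  assume "t \<in> {(a, b, c). 0 < b \<and> 0 < c \<and> a + b + c \<le> n}"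
    "u \<in> {(a, b, c). 0 < b \<and> 0 < c \<and> a + b + c \<le> n}"
    "(\<lambda>(a, b, c). block_swap a (b + d) (c + d)) t = (\<lambda>(a, b, c). block_swap a (b + d) (c + d)) u"
  moreover obtain a b c a' b' c' where "t = (a, b, c)" "u = (a', b', c')"
    using prod_cases3 by metis
  ultimately show "t = u"
    using block_swap_inj[of "b + d" "c + d" "b' + d" "c' + d" a a'] by simp
qed

theorem theorem5p2:
  fixes k m :: nat
  assumes "k \<ge> 1" and "k \<le> m" and "m < 2 * k"
  shows "card {p. p permutes {1..m} \<and> bigrassmannian m p \<and> avoids_id m k p}
           = (2 * k - m + 1) choose 3"
proof -
  have "card {p. p permutes {1..m} \<and> bigrassmannian m p \<and> avoids_id m k p}
      = card {(a, b, c). 0 < b \<and> 0 < c \<and> a + b + c \<le> 2 * k - m}"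
    unfolding bigrassmannian_avoiding_eq_image_block_swap[OF \<open>k \<le> m\<close>]
    by (rule card_image[OF inj_on_block_swap_shifted])
  then show ?thesis
    by (simp add: card_positive_gap_triples)
qed

end
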